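(* Let $(X,d)$ and $(Y,D)$ be metric spaces, $x\in X$, $y\in Y$. Suppose $\varepsilon\in(0,1]\mapsto\rho^x_\varepsilon$ is a zoom sequence at $x$ with values in $(Y,D)$ and base point $y$, with zoom modulus $F$, and suppose that for a given $\mu\in(0,1)$ this zoom sequence is scale stable at scale $\mu$, with limit relation $\bar\rho^x_\mu\subset\bar B(y,\mu)\times\bar B(y,1)$ and scale stability modulus $F_\mu$. Then for any $(u',u''),(v',v'')\in\bar\rho^x_\mu$ we have $$D(u'',v'')=\frac{1}{\mu}D(u',v').$$ In particular $\bar\rho^x_\mu$ is the graph of a function (its precision and resolution are equal to $0$).
   Context: For a relation $\rho\subset X\times Y$ between metric spaces $(X,d_X)$, $(Y,d_Y)$, its accuracy is $acc(\rho)=\sup\{|d_Y(y_1,y_2)-d_X(x_1,x_2)|:(x_1,y_1),(x_2,y_2)\in\rho\}$; $\mathrm{dom}\,\rho$ and $\mathrm{im}\,\rho$ denote the projections of $\rho$ to $X$ and $Y$. A zoom sequence at $x$ is a family $\varepsilon\in(0,1]\mapsto\rho^x_\varepsilon\subset\bar B(x,\varepsilon)\times Y$ with $\mathrm{dom}\,\rho^x_\varepsilon=\bar B(x,\varepsilon)$, $\mathrm{im}\,\rho^x_\varepsilon=Y$, $(x,y)\in\rho^x_\varepsilon$ for all $\varepsilon$, together with a zoom modulus $F:(0,1)\to[0,+\infty)$ with $\lim_{\varepsilon\to0}F(\varepsilon)=0$ such that $acc(\rho^x_\varepsilon)\le F(\varepsilon)$ for all $\varepsilon\in(0,1)$, where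 the accuracy is computed with the distance $\frac1\varepsilon d$ on $\bar B(x,\varepsilon)$ and $D$ on $Y$, i.e. $\sup\{|D(y_1,y_2)-\frac1\varepsilon d(x_1,x_2)|:(x_1,y_1),(x_2,y_2)\in\rho^x_\varepsilon\}\le F(\varepsilon)$. For $\mu\in(0,1)$ define $\rho^x_{\varepsilon,\mu}=\{(u',u'')\in\bar B(y,\mu)\times\bar B(y,1):\exists u\in\bar B(x,\varepsilon\mu),\ (u,u')\in\rho^x_\varepsilon,\ (u,u'')\in\rho^x_{\varepsilon\mu}\}$. The zoom sequence is scale stable at scale $\mu$ if there is a relation $\bar\rho^x_\mu\subset\bar B(y,\mu)\times\bar B(y,1)$ and a function $F_\mu$ with $F_\mu(\varepsilon)\to0$ as $\varepsilon\to0$ such that the Hausdorff distance between $\rho^x_{\varepsilon,\mu}$ and $\bar\rho^x_\mu$, in $\bar B(y,\mu)\times\bar B(y,1)$ with the distance $D_\mu((u',u''),(v',v''))=\frac1\mu D(u',v')+D(u'',v'')$, is at most $F_\mu(\varepsilon)$; $F_\mu$ is called a scale stability modulus. *)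

theory Defs
  imports "HOL-Analysis.Analysis"
begin

text \<open>Accuracy of a relation between two spaces with distances dX, dY
  (supremum taken in the extended reals; the sup of the empty set is -infinity).\<close>
definition acc :: "('a \<Rightarrow> 'a \<Rightarrow> real) \<Rightarrow> ('b \<Rightarrow> 'b \<Rightarrow> real) \<Rightarrow> ('a \<times> 'b) set \<Rightarrow> ereal" where
  "acc dX dY \<rho> = (SUP pq \<in> \<rho> \<times> \<rho>.
      ereal \<bar>dY (snd (fst pq)) (snd (snd pq)) - dX (fst (fst pq)) (fst (snd pq))\<bar>)"

text \<open>Hausdorff distance between two subsets for a given distance function
  (in the extended reals; it is +infinity if exactly one of the sets is empty).\<close>
definition hausdorff_dist :: "('a \<Rightarrow> 'a \<Rightarrow> real) \<Rightarrow> 'a set \<Rightarrow> 'a set \<Rightarrow> ereal" where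
  "hausdorff_dist d A B = max (SUP a\<in>A. INF b\<in>B. ereal (d a b)) (SUP b\<in>B. INF a\<in>A. ereal (d a b))"

definition zoom_sequence ::
  "'a::metric_space \<Rightarrow> 'b::metric_space \<Rightarrow> (real \<Rightarrow> ('a \<times> 'b) set) \<Rightarrow> (real \<Rightarrow> real) \<Rightarrow> bool" where
  "zoom_sequence x y \<rho> F \<longleftrightarrow>
     (\<forall>\<epsilon>\<in>{0<..1}. \<rho> \<epsilon> \<subseteq> cball x \<epsilon> \<times> UNIV \<and> fst ` \<rho> \<epsilon> = cball x \<epsilon> \<and>
                    snd ` \<rho> \<epsilon> = UNIV \<and> (x, y) \<in> \<rho> \<epsilon>) \<and>
     (\<forall>\<epsilon>\<in>{0<..<1}. F \<epsilon> \<ge> 0) \<and> (F \<longlongrightarrow> 0) (at_right 0) \<and>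
     (\<forall>\<epsilon>\<in>{0<..<1}. acc (\<lambda>a b. dist a b / \<epsilon>) dist (\<rho> \<epsilon>) \<le> ereal (F \<epsilon>))"

definition rho_eps_mu ::
  "'a::metric_space \<Rightarrow> 'b::metric_space \<Rightarrow> (real \<Rightarrow> ('a \<times> 'b) set) \<Rightarrow> real \<Rightarrow> real \<Rightarrow> ('b \<times> 'b) set" where
  "rho_eps_mu x y \<rho> \<epsilon> \<mu> = {(u', u''). u' \<in> cball y \<mu> \<and> u'' \<in> cball y 1 \<and>
      (\<exists>u \<in> cball x (\<epsilon> * \<mu>). (u, u') \<in> \<rho> \<epsilon> \<and> (u, u'') \<in> \<rho> (\<epsilon> * \<mu>))}"

definition D_mu :: "real \<Rightarrow> ('b::metric_space \<times> 'b) \<Rightarrow> ('b \<times> 'b) \<Rightarrow> real" where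
  "D_mu \<mu> p q = dist (fst p) (fst q) / \<mu> + dist (snd p) (snd q)"

definition scale_stable ::
  "'a::metric_space \<Rightarrow> 'b::metric_space \<Rightarrow> (real \<Rightarrow> ('a \<times> 'b) set) \<Rightarrow> real \<Rightarrow> ('b \<times> 'b) set \<Rightarrow> (real \<Rightarrow> real) \<Rightarrow> bool" where
  "scale_stable x y \<rho> \<mu> \<rho>bar F\<mu> \<longleftrightarrow>
     \<rho>bar \<subseteq> cball y \<mu> \<times> cball y 1 \<and> (F\<mu> \<longlongrightarrow> 0) (at_right 0) \<and>
     (\<forall>\<epsilon>\<in>{0<..<1}. hausdorff_dist (D_mu \<mu>) (rho_eps_mu x y \<rho> \<epsilon> \<mu>) \<rho>bar \<le> ereal (F\<mu> \<epsilon>))"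

end

theory Submission
  imports Defs
begin

text \<open>The relation \<open>rho_eps_mu x y \<rho> \<epsilon> \<mu>\<close> is the composition of \<open>\<rho> \<epsilon>\<close> (read backwards)
  with \<open>\<rho> (\<epsilon> * \<mu>)\<close>; both are almost isometries for the distance of \<open>X\<close> rescaled by
  \<open>1/\<epsilon>\<close> resp. \<open>1/(\<epsilon>\<mu>)\<close>, so it multiplies distances by \<open>1/\<mu>\<close> up to an error
  \<open>F(\<epsilon>\<mu>) + F(\<epsilon>)/\<mu>\<close>. By scale stability every pair of \<open>\<rho>bar\<close> is \<open>F\<mu>(\<epsilon>)\<close>-close in
  \<open>D_mu \<mu>\<close> to a pair of that relation, and the distortion \<open>D(u'',v'') - D(u',v')/\<mu>\<close> is
  1-Lipschitz for \<open>D_mu \<mu>\<close> in each pair. Hence the distortion on \<open>\<rho>bar\<close> is at most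
  \<open>F(\<epsilon>\<mu>) + F(\<epsilon>)/\<mu> + 2 F\<mu>(\<epsilon>)\<close> for every \<open>\<epsilon>\<close>, which tends to \<open>0\<close>.\<close>

lemma acc_le_imp_abs_diff_le:
  assumes "acc dX dY \<rho> \<le> ereal c" "(a, b) \<in> \<rho>" "(a', b') \<in> \<rho>"
  shows "\<bar>dY b b' - dX a a'\<bar> \<le> c"
proof -
  have "ereal \<bar>dY b b' - dX a a'\<bar> \<le> acc dX dY \<rho>"
    unfolding acc_def using assms(2,3) by (intro SUP_upper2[of "((a, b), (a', b'))"]) auto
  then have "ereal \<bar>dY b b' - dX a a'\<bar> \<le> ereal c" using assms(1) by (rule order_trans)
  then show ?thesis by simp
qed

lemma hausdorff_dist_le_imp_close:
  assumes "hausdorff_dist d A B \<le> ereal r" "p \<in> B" "\<delta> > 0"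
  obtains a where "a \<in> A" "d a p < r + \<delta>"
proof -
  have "(INF a\<in>A. ereal (d a p)) \<le> (SUP b\<in>B. INF a\<in>A. ereal (d a b))"
    using assms(2) by (rule SUP_upper2) simp
  also have "\<dots> \<le> ereal r" using assms(1) unfolding hausdorff_dist_def by simp
  also have "\<dots> < ereal (r + \<delta>)" using assms(3) by simp
  finally show ?thesis using that by (auto simp: INF_less_iff)
qed

lemma abs_dist_diff_le_dist_add_dist:
  "\<bar>dist u v - dist a b\<bar> \<le> dist a u + dist b v"
  by metric

lemma abs_distortion_diff_le_D_mu:
  assumes "\<mu> > 0"
  shows "\<bar>(dist u'' v'' - dist u' v' / \<mu>) - (dist a'' b'' - dist a' b' / \<mu>)\<bar>
    \<le> D_mu \<mu> (a', a'') (u', u'') + D_mu \<mu> (b', b'') (v', v'')"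
proof -
  have "\<bar>dist u' v' - dist a' b'\<bar> / \<mu> \<le> (dist a' u' + dist b' v') / \<mu>"
    using assms by (intro divide_right_mono abs_dist_diff_le_dist_add_dist) auto
  then have "\<bar>dist u' v' / \<mu> - dist a' b' / \<mu>\<bar> \<le> dist a' u' / \<mu> + dist b' v' / \<mu>"
    using assms by (simp add: add_divide_distrib flip: diff_divide_distrib)
  moreover have "\<bar>dist u'' v'' - dist a'' b''\<bar> \<le> dist a'' u'' + dist b'' v''"
    by (rule abs_dist_diff_le_dist_add_dist)
  ultimately show ?thesis unfolding D_mu_def by simp
qed

lemma zoom_sequence_acc_le:
  assumes "zoom_sequence x y \<rho> F" "\<epsilon> \<in> {0<..<1}" "(a, b) \<in> \<rho> \<epsilon>" "(a', b') \<in> \<rho> \<epsilon>"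
  shows "\<bar>dist b b' - dist a a' / \<epsilon>\<bar> \<le> F \<epsilon>"
proof -
  have "acc (\<lambda>a b. dist a b / \<epsilon>) dist (\<rho> \<epsilon>) \<le> ereal (F \<epsilon>)"
    using assms(1,2) unfolding zoom_sequence_def by blast
  from acc_le_imp_abs_diff_le[OF this assms(3,4)] show ?thesis by simp
qed

lemma rho_eps_mu_distortion_le:
  assumes Z: "zoom_sequence x y \<rho> F" and \<mu>: "\<mu> \<in> {0<..<1}" and \<epsilon>: "\<epsilon> \<in> {0<..<1}"
    and a: "(a', a'') \<in> rho_eps_mu x y \<rho> \<epsilon> \<mu>" and b: "(b', b'') \<in> rho_eps_mu x y \<rho> \<epsilon> \<mu>"
  shows "\<bar>dist a'' b'' - dist a' b' / \<mu>\<bar> \<le> F (\<epsilon> * \<mu>) + F \<epsilon> / \<mu>"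
proof -
  obtain u where u: "(u, a') \<in> \<rho> \<epsilon>" "(u, a'') \<in> \<rho> (\<epsilon> * \<mu>)"
    using a unfolding rho_eps_mu_def by auto
  obtain w where w: "(w, b') \<in> \<rho> \<epsilon>" "(w, b'') \<in> \<rho> (\<epsilon> * \<mu>)"
    using b unfolding rho_eps_mu_def by auto
  have "\<epsilon> * \<mu> \<in> {0<..<1}"
    using \<mu> \<epsilon> mult_strict_mono[of \<epsilon> 1 \<mu> 1] by auto
  from zoom_sequence_acc_le[OF Z this u(2) w(2)]
  have small: "\<bar>dist a'' b'' - dist u w / (\<epsilon> * \<mu>)\<bar> \<le> F (\<epsilon> * \<mu>)" .
  have "\<bar>dist a' b' / \<mu> - dist u w / (\<epsilon> * \<mu>)\<bar> = \<bar>dist a' b' - dist u w / \<epsilon>\<bar> / \<mu>"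
    using \<mu> by (simp add: field_simps abs_div_pos flip: abs_divide)
  also have "\<dots> \<le> F \<epsilon> / \<mu>"
    using zoom_sequence_acc_le[OF Z \<epsilon> u(1) w(1)] \<mu> by (simp add: divide_right_mono)
  finally show ?thesis using small by linarith
qed

lemma scale_stable_distortion_le:
  assumes Z: "zoom_sequence x y \<rho> F" and \<mu>: "\<mu> \<in> {0<..<1}"
    and S: "scale_stable x y \<rho> \<mu> \<rho>bar F\<mu>" and \<epsilon>: "\<epsilon> \<in> {0<..<1}"
    and U: "(u', u'') \<in> \<rho>bar" and V: "(v', v'') \<in> \<rho>bar"
  shows "\<bar>dist u'' v'' - dist u' v' / \<mu>\<bar> \<le> F (\<epsilon> * \<mu>) + F \<epsilon> / \<mu> + 2 * F\<mu> \<epsilon>"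
proof (rule field_le_epsilon)
  fix \<delta> :: real assume "\<delta> > 0"
  then have \<delta>: "\<delta> / 2 > 0" by simp
  have H: "hausdorff_dist (D_mu \<mu>) (rho_eps_mu x y \<rho> \<epsilon> \<mu>) \<rho>bar \<le> ereal (F\<mu> \<epsilon>)"
    using S \<epsilon> unfolding scale_stable_def by blast
  obtain a' a'' where a: "(a', a'') \<in> rho_eps_mu x y \<rho> \<epsilon> \<mu>"
    and da: "D_mu \<mu> (a', a'') (u', u'') < F\<mu> \<epsilon> + \<delta> / 2"
    using hausdorff_dist_le_imp_close[OF H U \<delta>] by (metis surj_pair)
  obtain b' b'' where b: "(b', b'') \<in> rho_eps_mu x y \<rho> \<epsilon> \<mu>"
    and db: "D_mu \<mu> (b', b'') (v', v'') < F\<mu> \<epsilon> + \<delta> / 2"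
    using hausdorff_dist_le_imp_close[OF H V \<delta>] by (metis surj_pair)
  have "\<bar>dist a'' b'' - dist a' b' / \<mu>\<bar> \<le> F (\<epsilon> * \<mu>) + F \<epsilon> / \<mu>"
    using Z \<mu> \<epsilon> a b by (rule rho_eps_mu_distortion_le)
  moreover have "\<bar>(dist u'' v'' - dist u' v' / \<mu>) - (dist a'' b'' - dist a' b' / \<mu>)\<bar>
      \<le> D_mu \<mu> (a', a'') (u', u'') + D_mu \<mu> (b', b'') (v', v'')"
    using \<mu> by (intro abs_distortion_diff_le_D_mu) simp
  ultimately show "\<bar>dist u'' v'' - dist u' v' / \<mu>\<bar> \<le> F (\<epsilon> * \<mu>) + F \<epsilon> / \<mu> + 2 * F\<mu> \<epsilon> + \<delta>"
    using da db by linarith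
qed

lemma tendsto_at_right_0_scale:
  fixes f :: "real \<Rightarrow> 'b::topological_space"
  assumes "(f \<longlongrightarrow> l) (at_right 0)" "\<mu> > 0"
  shows "((\<lambda>\<epsilon>. f (\<epsilon> * \<mu>)) \<longlongrightarrow> l) (at_right 0)"
proof -
  have "eventually (\<lambda>\<epsilon>. 0 < \<epsilon> * \<mu>) (at_right 0)"
    using eventually_at_right_less[of 0] by (rule eventually_mono) (use assms(2) in simp)
  then have "filterlim (\<lambda>\<epsilon>. \<epsilon> * \<mu>) (at_right 0) (at_right 0)"
    unfolding filterlim_at
    by (auto elim: eventually_mono intro!: tendsto_mult_left_zero tendsto_ident_at)
  with assms(1) show ?thesis by (rule filterlim_compose)
qed

theorem proposition4p3:
  fixes x :: "'a::metric_space" and y :: "'b::metric_space"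
    and \<rho> :: "real \<Rightarrow> ('a \<times> 'b) set" and F F\<mu> :: "real \<Rightarrow> real"
    and \<mu> :: real and \<rho>bar :: "('b \<times> 'b) set"
  assumes "zoom_sequence x y \<rho> F"
    and "\<mu> \<in> {0<..<1}"
    and "scale_stable x y \<rho> \<mu> \<rho>bar F\<mu>"
  shows "\<forall>(u', u'') \<in> \<rho>bar. \<forall>(v', v'') \<in> \<rho>bar. dist u'' v'' = dist u' v' / \<mu>"
proof (intro ballI, clarify)
  fix u' u'' v' v'' assume U: "(u', u'') \<in> \<rho>bar" and V: "(v', v'') \<in> \<rho>bar"
  have "(F \<longlongrightarrow> 0) (at_right 0)" "(F\<mu> \<longlongrightarrow> 0) (at_right 0)"
    using assms(1,3) unfolding zoom_sequence_def scale_stable_def by blast+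
  then have bound_to_0: "((\<lambda>\<epsilon>. F (\<epsilon> * \<mu>) + F \<epsilon> / \<mu> + 2 * F\<mu> \<epsilon>) \<longlongrightarrow> 0) (at_right 0)"
    using assms(2) by (auto intro!: tendsto_eq_intros tendsto_at_right_0_scale)
  have "eventually (\<lambda>\<epsilon>. \<epsilon> \<in> {0<..<1}) (at_right (0::real))"
    by (simp add: eventually_at_right_field) (metis zero_less_one)
  then have "eventually (\<lambda>\<epsilon>. \<bar>dist u'' v'' - dist u' v' / \<mu>\<bar>
      \<le> F (\<epsilon> * \<mu>) + F \<epsilon> / \<mu> + 2 * F\<mu> \<epsilon>) (at_right 0)"
    by eventually_elim (rule scale_stable_distortion_le[OF assms(1-3) _ U V])
  from tendsto_lowerbound[OF bound_to_0 this trivial_limit_at_right_real]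
  show "dist u'' v'' = dist u' v' / \<mu>" by simp
qed

end
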